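(* Let $\alpha>1$ be rational and $t$ a positive integer. For any instance $(I,B,v,C)$, let $\mathrm{OPT}$ be the optimal value of the Max-Buying-PL-Limited Problem and $\mathrm{OPT}'$ the optimal value of the Max-Buying-PL-Limited-$(\alpha,t)$ Problem on it. Then $\mathrm{OPT}'\ge \mathrm{OPT}/\alpha$.
   Context: Items are $I=\{1,\dots,n\}$, bidders form a finite set $B$, $v=(v_{ib})$ is a non-negative integer valuation matrix and $C_i$ are non-negative integer capacities. Max-Buying-PL-Limited Problem: choose a pricing $p\in\mathbb{Q}_{\ge0}^I$ with $p_1\ge\dots\ge p_n$ and an allocation $x:B\to I\cup\{\emptyset\}$ such that each item $i$ is allocated to at most $C_i$ bidders and $x_b=i$ implies $p_i\le v_{ib}$, maximizing $\sum_{b:x_b\ne\emptyset}p_{x_b}$. For $k\ge0$ let $d_k=\max\{v_{ib}\}/\alpha^k$. Max-Buying-PL-Limited-$(\alpha,t)$ Problem: choose prices $p_1\ge\dots\ge p_n$ with each $p_i\in\{d_0,d_1,\dots\}$ and a set of item–bidder pairs $(i,b)$ such that each item $i$ is given to at most $C_i$ bidders, $p_i\le v_{ib}$ whenever $b$ receives $i$, and for every integer $r\ge0$ each bidder receives at most one item with price in $\{d_{rt},\dots,d_{(r+1)t-1}\}$; the profit is the sum of $p_i$ over allocated pairs $(i,b)$. *)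

theory Defs
  imports Complex_Main
begin

definition vmax :: "nat \<Rightarrow> 'b set \<Rightarrow> (nat \<Rightarrow> 'b \<Rightarrow> nat) \<Rightarrow> nat" where
  "vmax n B v = Max (insert 0 {v i b | i b. i \<in> {1..n} \<and> b \<in> B})"

definition feasible_PL ::
  "nat \<Rightarrow> 'b set \<Rightarrow> (nat \<Rightarrow> 'b \<Rightarrow> nat) \<Rightarrow> (nat \<Rightarrow> nat) \<Rightarrow> (nat \<Rightarrow> rat) \<Rightarrow> ('b \<Rightarrow> nat option) \<Rightarrow> bool" where
  "feasible_PL n B v C p x \<longleftrightarrow>
     (\<forall>i\<in>{1..n}. p i \<ge> 0) \<and>
     (\<forall>i\<in>{1..n}. \<forall>j\<in>{1..n}. i \<le> j \<longrightarrow> p j \<le> p i) \<and>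
     (\<forall>b\<in>B. x b = None \<or> (\<exists>i\<in>{1..n}. x b = Some i)) \<and>
     (\<forall>i\<in>{1..n}. card {b\<in>B. x b = Some i} \<le> C i) \<and>
     (\<forall>b\<in>B. \<forall>i. x b = Some i \<longrightarrow> p i \<le> of_nat (v i b))"

definition profit_PL :: "'b set \<Rightarrow> (nat \<Rightarrow> rat) \<Rightarrow> ('b \<Rightarrow> nat option) \<Rightarrow> rat" where
  "profit_PL B p x = (\<Sum>b\<in>B. case x b of None \<Rightarrow> 0 | Some i \<Rightarrow> p i)"

definition OPT_PL :: "nat \<Rightarrow> 'b set \<Rightarrow> (nat \<Rightarrow> 'b \<Rightarrow> nat) \<Rightarrow> (nat \<Rightarrow> nat) \<Rightarrow> real" where
  "OPT_PL n B v C = Sup {real_of_rat (profit_PL B p x) | p x. feasible_PL n B v C p x}"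

definition dlev :: "nat \<Rightarrow> 'b set \<Rightarrow> (nat \<Rightarrow> 'b \<Rightarrow> nat) \<Rightarrow> rat \<Rightarrow> nat \<Rightarrow> rat" where
  "dlev n B v \<alpha> k = of_nat (vmax n B v) / \<alpha> ^ k"

definition feasible_PLat ::
  "rat \<Rightarrow> nat \<Rightarrow> nat \<Rightarrow> 'b set \<Rightarrow> (nat \<Rightarrow> 'b \<Rightarrow> nat) \<Rightarrow> (nat \<Rightarrow> nat) \<Rightarrow> (nat \<Rightarrow> rat) \<Rightarrow> (nat \<times> 'b) set \<Rightarrow> bool" where
  "feasible_PLat \<alpha> t n B v C p A \<longleftrightarrow>
     (\<forall>i\<in>{1..n}. p i \<in> range (dlev n B v \<alpha>)) \<and>
     (\<forall>i\<in>{1..n}. \<forall>j\<in>{1..n}. i \<le> j \<longrightarrow> p j \<le> p i) \<and>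
     A \<subseteq> {1..n} \<times> B \<and>
     (\<forall>i\<in>{1..n}. card {b. (i, b) \<in> A} \<le> C i) \<and>
     (\<forall>(i, b)\<in>A. p i \<le> of_nat (v i b)) \<and>
     (\<forall>r::nat. \<forall>b\<in>B.
        card {i. (i, b) \<in> A \<and> p i \<in> dlev n B v \<alpha> ` {r * t..<(r + 1) * t}} \<le> 1)"

definition profit_PLat :: "(nat \<Rightarrow> rat) \<Rightarrow> (nat \<times> 'b) set \<Rightarrow> rat" where
  "profit_PLat p A = (\<Sum>(i, b)\<in>A. p i)"

definition OPT_PLat :: "rat \<Rightarrow> nat \<Rightarrow> nat \<Rightarrow> 'b set \<Rightarrow> (nat \<Rightarrow> 'b \<Rightarrow> nat) \<Rightarrow> (nat \<Rightarrow> nat) \<Rightarrow> real" where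
  "OPT_PLat \<alpha> t n B v C =
     Sup {real_of_rat (profit_PLat p A) | p A. feasible_PLat \<alpha> t n B v C p A}"

end

theory Submission
  imports Defs
begin

text \<open>Round every positive price down to the nearest price level \<open>d\<^sub>k\<close> below it; as consecutive
levels differ by the factor \<open>\<alpha>\<close>, this loses at most a factor \<open>\<alpha>\<close> of the profit, keeps the prices
nonincreasing, and keeps every sold item affordable. A solution of the unrestricted problem gives
each bidder at most one item, so the per-bidder restriction to one item per block of \<open>t\<close>
consecutive levels holds for every \<open>t\<close>. Pairs sold at price zero are dropped, since rounding
might make their price positive.\<close>

lemma ex_less_power:
  fixes \<alpha> y :: "'a::archimedean_field"
  assumes "1 < \<alpha>"
  shows "\<exists>k. y < \<alpha> ^ k"
proof -
  obtain k where k: "y < of_nat k * (\<alpha> - 1)"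
    using ex_less_of_nat_mult[of "\<alpha> - 1" y] assms by auto
  have "1 + of_nat k * (\<alpha> - 1) \<le> (1 + (\<alpha> - 1)) ^ k"
    by (rule Bernoulli_inequality) (use assms in auto)
  with k have "y < \<alpha> ^ k" by simp
  then show ?thesis ..
qed

definition level :: "'a::archimedean_field \<Rightarrow> 'a \<Rightarrow> 'a \<Rightarrow> nat" where
  "level \<alpha> c y = (LEAST k. c / \<alpha> ^ k \<le> y)"

lemma ex_level_le:
  fixes \<alpha> c y :: "'a::archimedean_field"
  assumes "1 < \<alpha>" "0 < y"
  shows "\<exists>k. c / \<alpha> ^ k \<le> y"
proof -
  obtain k where "c / y < \<alpha> ^ k" using ex_less_power[OF assms(1)] by blast
  then have "c / \<alpha> ^ k \<le> y"
    using assms by (simp add: field_simps)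
  then show ?thesis ..
qed

lemma level_le:
  fixes \<alpha> c y :: "'a::archimedean_field"
  assumes "1 < \<alpha>" "0 < y"
  shows "c / \<alpha> ^ level \<alpha> c y \<le> y"
  unfolding level_def using ex_level_le[OF assms] by (rule LeastI_ex)

lemma le_mult_level:
  fixes \<alpha> c y :: "'a::archimedean_field"
  assumes "1 < \<alpha>" "0 \<le> c" "y \<le> c"
  shows "y \<le> \<alpha> * (c / \<alpha> ^ level \<alpha> c y)"
proof (cases "level \<alpha> c y")
  case 0
  then show ?thesis
    using assms mult_right_mono[of 1 \<alpha> c] by simp
next
  case (Suc k)
  then have "\<not> c / \<alpha> ^ k \<le> y"
    unfolding level_def by (metis lessI not_less_Least)
  then show ?thesis
    using Suc assms by (simp add: field_simps)
qed

lemma level_antimono: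
  fixes \<alpha> c y y' :: "'a::archimedean_field"
  assumes "1 < \<alpha>" "0 < y" "y \<le> y'"
  shows "level \<alpha> c y' \<le> level \<alpha> c y"
  unfolding level_def[of \<alpha> c y']
  using level_le[OF assms(1,2), of c] assms(3) by (intro Least_le) simp

lemma level_price_mono:
  fixes \<alpha> c y y' :: "'a::archimedean_field"
  assumes "1 < \<alpha>" "0 \<le> c" "0 < y" "y \<le> y'"
  shows "c / \<alpha> ^ level \<alpha> c y \<le> c / \<alpha> ^ level \<alpha> c y'"
  using assms level_antimono[OF assms(1,3,4), of c]
  by (intro divide_left_mono power_increasing) auto

lemma le_vmax:
  assumes "finite B" "i \<in> {1..n}" "b \<in> B"
  shows "v i b \<le> vmax n B v"
proof -
  have "{v i b |i b. i \<in> {1..n} \<and> b \<in> B} = (\<lambda>(i, b). v i b) ` ({1..n} \<times> B)"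
    by (auto simp: image_iff) blast
  then have "finite (insert 0 {v i b |i b. i \<in> {1..n} \<and> b \<in> B})"
    using assms(1) by simp
  then show ?thesis
    unfolding vmax_def by (rule Max_ge) (use assms in auto)
qed

lemma profit_PL_eq_profit_PLat:
  assumes "finite B"
  shows "profit_PL B p x = profit_PLat p {(i, b). b \<in> B \<and> x b = Some i \<and> p i \<noteq> 0}"
proof -
  let ?B' = "{b \<in> B. \<exists>i. x b = Some i \<and> p i \<noteq> 0}"
  have graph: "{(i, b). b \<in> B \<and> x b = Some i \<and> p i \<noteq> 0} = (\<lambda>b. (the (x b), b)) ` ?B'"
    by force
  have "profit_PL B p x = (\<Sum>b\<in>?B'. p (the (x b)))"
    unfolding profit_PL_def using assms
    by (intro sum.mono_neutral_cong_right) (auto split: option.split)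
  also have "\<dots> = profit_PLat p {(i, b). b \<in> B \<and> x b = Some i \<and> p i \<noteq> 0}"
    unfolding profit_PLat_def graph by (subst sum.reindex) (auto intro: inj_onI)
  finally show ?thesis .
qed

lemma profit_PLat_le_card_vmax:
  assumes "finite B" "feasible_PLat \<alpha> t n B v C p A"
  shows "profit_PLat p A \<le> of_nat (card ({1..n} \<times> B)) * of_nat (vmax n B v)"
proof -
  note F = assms(2)[unfolded feasible_PLat_def]
  have A: "A \<subseteq> {1..n} \<times> B" using F by blast
  have "profit_PLat p A \<le> (\<Sum>ib\<in>A. of_nat (vmax n B v))"
    unfolding profit_PLat_def
  proof (rule sum_mono, clarify)
    fix i b assume ib: "(i, b) \<in> A"
    then have "p i \<le> of_nat (v i b)" using F by blast
    also have "\<dots> \<le> of_nat (vmax n B v)" using le_vmax[OF assms(1)] A ib by auto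
    finally show "p i \<le> of_nat (vmax n B v)" .
  qed
  also have "\<dots> = of_nat (card A) * of_nat (vmax n B v)" by simp
  also have "\<dots> \<le> of_nat (card ({1..n} \<times> B)) * of_nat (vmax n B v)"
  proof (rule mult_right_mono)
    have "card A \<le> card ({1..n} \<times> B)" using card_mono[OF _ A] assms(1) by simp
    then show "rat_of_nat (card A) \<le> of_nat (card ({1..n} \<times> B))" by (simp only: of_nat_le_iff)
  qed simp
  finally show ?thesis .
qed

lemma feasible_PLat_restrict:
  assumes "finite B" and F: "feasible_PL n B v C p x"
    and q_levels: "\<forall>i\<in>{1..n}. q i \<in> range (dlev n B v \<alpha>)"
    and q_mono: "\<forall>i\<in>{1..n}. \<forall>j\<in>{1..n}. i \<le> j \<longrightarrow> q j \<le> q i"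
    and q_le: "\<forall>i\<in>{1..n}. p i \<noteq> 0 \<longrightarrow> q i \<le> p i"
  shows "feasible_PLat \<alpha> t n B v C q {(i, b). b \<in> B \<and> x b = Some i \<and> p i \<noteq> 0}"
    (is "feasible_PLat _ _ _ _ _ _ _ ?A")
proof -
  note F = F[unfolded feasible_PL_def]
  have A: "?A \<subseteq> {1..n} \<times> B" using F by auto
  have capacity: "\<forall>i\<in>{1..n}. card {b. (i, b) \<in> ?A} \<le> C i"
  proof
    fix i assume "i \<in> {1..n}"
    have "card {b. (i, b) \<in> ?A} \<le> card {b \<in> B. x b = Some i}"
      using assms(1) by (intro card_mono) auto
    then show "card {b. (i, b) \<in> ?A} \<le> C i" using F \<open>i \<in> {1..n}\<close> by (meson order_trans)
  qed
  have affordable: "\<forall>(i, b)\<in>?A. q i \<le> of_nat (v i b)"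
  proof (intro ballI, clarify)
    fix i b assume "b \<in> B" "x b = Some i" "p i \<noteq> 0"
    then have "q i \<le> p i" "p i \<le> of_nat (v i b)" using F q_le by auto
    then show "q i \<le> of_nat (v i b)" by (rule order_trans)
  qed
  have one_item: "\<forall>r::nat. \<forall>b\<in>B.
      card {i. (i, b) \<in> ?A \<and> q i \<in> dlev n B v \<alpha> ` {r * t..<(r + 1) * t}} \<le> 1"
  proof (intro allI ballI)
    fix r :: nat and b
    let ?S = "dlev n B v \<alpha> ` {r * t..<(r + 1) * t}"
    have "{i. (i, b) \<in> ?A \<and> q i \<in> ?S} \<subseteq> set_option (x b)" by auto
    then have "card {i. (i, b) \<in> ?A \<and> q i \<in> ?S} \<le> card (set_option (x b))"
      by (intro card_mono) auto
    also have "\<dots> \<le> 1" by (cases "x b") auto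
    finally show "card {i. (i, b) \<in> ?A \<and> q i \<in> ?S} \<le> 1" .
  qed
  show ?thesis
    unfolding feasible_PLat_def using q_levels q_mono A capacity affordable one_item
    by (intro conjI) assumption+
qed

lemma feasible_PL_rounding:
  assumes "1 < \<alpha>" "finite B" and F: "feasible_PL n B v C p x"
  shows "\<exists>q A. feasible_PLat \<alpha> t n B v C q A \<and> profit_PL B p x \<le> \<alpha> * profit_PLat q A"
proof -
  define c where "c = rat_of_nat (vmax n B v)"
  \<comment> \<open>Clamping at the least positive price \<open>m\<close> keeps \<open>level\<close> away from the empty \<open>LEAST\<close>
    at zero prices, and keeps them rounded to the lowest level used.\<close>
  define m where "m = Min (insert 1 (p ` {i \<in> {1..n}. 0 < p i}))"
  define q where "q i = c / \<alpha> ^ level \<alpha> c (max (p i) m)" for i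
  define A where "A = {(i, b). b \<in> B \<and> x b = Some i \<and> p i \<noteq> 0}"
  have c_nonneg: "0 \<le> c" by (simp add: c_def)
  from F have p_nonneg: "\<forall>i\<in>{1..n}. 0 \<le> p i"
    and p_mono: "\<forall>i\<in>{1..n}. \<forall>j\<in>{1..n}. i \<le> j \<longrightarrow> p j \<le> p i"
    and x_items: "\<forall>b\<in>B. x b = None \<or> (\<exists>i\<in>{1..n}. x b = Some i)"
    and p_le_v: "\<forall>b\<in>B. \<forall>i. x b = Some i \<longrightarrow> p i \<le> of_nat (v i b)"
    unfolding feasible_PL_def by blast+
  have m_pos: "0 < m" unfolding m_def by (simp add: Min_gr_iff)
  have m_le: "m \<le> p i" if "i \<in> {1..n}" "0 < p i" for i
    unfolding m_def using that by (simp add: Min_le_iff)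
  have p_pos: "0 < p i" if "i \<in> {1..n}" "p i \<noteq> 0" for i
    using p_nonneg that by force
  have q_le: "q i \<le> p i" if "i \<in> {1..n}" "p i \<noteq> 0" for i
    using level_le[OF assms(1), of "max (p i) m" c] m_pos m_le[OF that(1) p_pos[OF that]]
    by (simp add: q_def max_def)
  have q_mono: "q j \<le> q i" if "p j \<le> p i" for i j
    unfolding q_def
  proof (rule level_price_mono[OF assms(1)])
    show "0 \<le> c" by (rule c_nonneg)
    show "0 < max (p j) m" using m_pos by simp
    show "max (p j) m \<le> max (p i) m" using that by (rule max.mono) simp
  qed
  have q_level: "q i \<in> range (dlev n B v \<alpha>)" for i
    unfolding q_def c_def dlev_def by (rule rangeI)
  have "feasible_PLat \<alpha> t n B v C q A"
    unfolding A_def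
  proof (rule feasible_PLat_restrict[OF assms(2) F])
    show "\<forall>i\<in>{1..n}. \<forall>j\<in>{1..n}. i \<le> j \<longrightarrow> q j \<le> q i"
      using p_mono q_mono by simp
  qed (use q_level q_le in auto)
  moreover have "profit_PL B p x \<le> \<alpha> * profit_PLat q A"
  proof -
    have "profit_PL B p x = profit_PLat p A"
      unfolding A_def by (rule profit_PL_eq_profit_PLat[OF assms(2)])
    also have "\<dots> \<le> (\<Sum>(i, b)\<in>A. \<alpha> * q i)"
      unfolding profit_PLat_def
    proof (rule sum_mono, clarify)
      fix i b assume "(i, b) \<in> A"
      then have ib: "b \<in> B" "x b = Some i" "p i \<noteq> 0" by (simp_all add: A_def)
      with x_items have i: "i \<in> {1..n}" by auto
      have "p i \<le> of_nat (v i b)" using p_le_v ib by blast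
      also have "\<dots> \<le> c" using le_vmax[OF assms(2) i ib(1), of v] by (simp add: c_def)
      finally have "p i \<le> \<alpha> * (c / \<alpha> ^ level \<alpha> c (p i))"
        by (rule le_mult_level[OF assms(1) c_nonneg])
      then show "p i \<le> \<alpha> * q i"
        using m_le[OF i p_pos[OF i ib(3)]] by (simp add: q_def max_absorb1)
    qed
    also have "\<dots> = \<alpha> * profit_PLat q A"
      by (simp add: profit_PLat_def sum_distrib_left case_prod_beta)
    finally show ?thesis .
  qed
  ultimately show ?thesis by blast
qed

lemma bdd_above_profits_PLat:
  assumes "finite B"
  shows "bdd_above {real_of_rat (profit_PLat p A) | p A. feasible_PLat \<alpha> t n B v C p A}"
proof (rule bdd_aboveI, clarify)
  fix p A assume "feasible_PLat \<alpha> t n B v C p A"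
  then show "real_of_rat (profit_PLat p A)
      \<le> real_of_rat (of_nat (card ({1..n} \<times> B)) * of_nat (vmax n B v))"
    unfolding of_rat_less_eq by (rule profit_PLat_le_card_vmax[OF assms])
qed

lemma cSup_le_mult_cSup:
  fixes S T :: "real set"
  assumes "S \<noteq> {}" "bdd_above T" "0 \<le> c" "\<forall>s\<in>S. \<exists>u\<in>T. s \<le> c * u"
  shows "Sup S \<le> c * Sup T"
proof (rule cSup_least[OF assms(1)])
  fix s assume "s \<in> S"
  then obtain u where "u \<in> T" "s \<le> c * u" using assms(4) by blast
  then show "s \<le> c * Sup T"
    using assms(2,3) by (meson cSup_upper mult_left_mono order_trans)
qed

theorem lemma15:
  fixes \<alpha> :: rat and t n :: nat and B :: "'b set"
    and v :: "nat \<Rightarrow> 'b \<Rightarrow> nat" and C :: "nat \<Rightarrow> nat"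
  assumes "\<alpha> > 1" and "t > 0" and "finite B"
  shows "OPT_PLat \<alpha> t n B v C \<ge> OPT_PL n B v C / real_of_rat \<alpha>"
proof -
  let ?S = "{real_of_rat (profit_PL B p x) | p x. feasible_PL n B v C p x}"
  let ?T = "{real_of_rat (profit_PLat p A) | p A. feasible_PLat \<alpha> t n B v C p A}"
  have "feasible_PL n B v C (\<lambda>_. 0) (\<lambda>_. None)"
    unfolding feasible_PL_def by simp
  then have "?S \<noteq> {}" by blast
  moreover have "\<forall>s\<in>?S. \<exists>u\<in>?T. s \<le> real_of_rat \<alpha> * u"
  proof clarify
    fix p x assume "feasible_PL n B v C p x"
    then obtain q A where "feasible_PLat \<alpha> t n B v C q A" "profit_PL B p x \<le> \<alpha> * profit_PLat q A"
      using feasible_PL_rounding[OF assms(1,3)] by blast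
    then have "real_of_rat (profit_PLat q A) \<in> ?T"
      "real_of_rat (profit_PL B p x) \<le> real_of_rat \<alpha> * real_of_rat (profit_PLat q A)"
      unfolding of_rat_mult[symmetric] of_rat_less_eq by blast+
    then show "\<exists>u\<in>?T. real_of_rat (profit_PL B p x) \<le> real_of_rat \<alpha> * u" ..
  qed
  ultimately have "OPT_PL n B v C \<le> real_of_rat \<alpha> * OPT_PLat \<alpha> t n B v C"
    unfolding OPT_PL_def OPT_PLat_def using assms(1)
    by (intro cSup_le_mult_cSup bdd_above_profits_PLat[OF assms(3)]) auto
  then show ?thesis
    using assms(1) by (simp add: divide_le_eq mult.commute)
qed

end
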